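(* Let $\mathbb{K}\in\{\mathbb{R},\mathbb{C}\}$ and let $\mathcal{X}$ be a topological $\mathbb{K}$-vector space whose topological dual $\mathcal{X}^{\ast}$ separates the points of $\mathcal{X}$. Then for every cylinder $\mathcal{V}\in\mathcal{C}$, both $\mathbf{B}_{\mathcal{V}}(\mathcal{X}^{\ast})$ and its complement $\mathbf{F}(\mathcal{X}^{\ast})\setminus\mathbf{B}_{\mathcal{V}}(\mathcal{X}^{\ast})$ are closed (hence both are open and closed) subsets of $\mathbf{F}(\mathcal{X}^{\ast})$ in the weak*-Hausdorff hypertopology.
   Context: Topological vector spaces are Hausdorff. $\mathcal{X}^{\ast}$ carries the weak* topology. $\mathbf{F}(\mathcal{X}^{\ast})$ is the set of nonempty weak*-closed subsets of $\mathcal{X}^{\ast}$. For $A\in\mathcal{X}$ and $F,\tilde F\in\mathbf{F}(\mathcal{X}^{\ast})$, $d_H^{(A)}(F,\tilde F)=\max\{\sup_{\sigma\in F}\inf_{\tilde\sigma\in\tilde F}|(\sigma-\tilde\sigma)(A)|,\ \sup_{\tilde\sigma\in\tilde F}\inf_{\sigma\in F}|(\sigma-\tilde\sigma)(A)|\}\in[0,\infty]$. The weak*-Hausdorff hypertopology on $\mathbf{F}(\mathcal{X}^{\ast})$ is the topology generated by the family of extended pseudometrics $\{d_H^{(A)}\}_{A\in\mathcal{X}}$ (a net $F_j\to F$ iff $d_H^{(A)}(F_j,F)\to0$ for all $A\in\mathcal{X}$). For $A\in\mathcal{X}$ let $\mathcal{V}_A=\{\sigma\in\mathcal{X}^{\ast}:|\sigma(A)|<1\}$;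 $\mathcal{C}=\{\bigcap_{j=1}^n\mathcal{V}_{A_j}: n\in\mathbb{N},\ A_1,\dots,A_n\in\mathcal{X}\}$. For $\mathcal{V}\in\mathcal{C}$, $\mathbf{B}_{\mathcal{V}}(\mathcal{X}^{\ast})=\{B\in\mathbf{F}(\mathcal{X}^{\ast}): B\subseteq\lambda\mathcal{V}\text{ for some }\lambda>0\}$. *)

theory Defs
  imports "HOL-Analysis.Analysis"
begin

definition tvs :: "('k::real_normed_field \<Rightarrow> 'x::{ab_group_add,topological_space} \<Rightarrow> 'x) \<Rightarrow> bool" where
  "tvs smul \<longleftrightarrow> Vector_Spaces.vector_space smul
     \<and> continuous_on UNIV (\<lambda>p::'x \<times> 'x. fst p + snd p)
     \<and> continuous_on UNIV (\<lambda>p::'k \<times> 'x. smul (fst p) (snd p))"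

definition dual :: "('k::real_normed_field \<Rightarrow> 'x::{ab_group_add,topological_space} \<Rightarrow> 'x) \<Rightarrow> ('x \<Rightarrow> 'k) set" where
  "dual smul = {\<sigma>. Vector_Spaces.linear smul (*) \<sigma> \<and> continuous_on UNIV \<sigma>}"

definition dual_separates :: "('k::real_normed_field \<Rightarrow> 'x::{ab_group_add,topological_space} \<Rightarrow> 'x) \<Rightarrow> bool" where
  "dual_separates smul \<longleftrightarrow> (\<forall>x y. x \<noteq> y \<longrightarrow> (\<exists>\<sigma>\<in>dual smul. \<sigma> x \<noteq> \<sigma> y))"

definition weak_star :: "('k::real_normed_field \<Rightarrow> 'x::{ab_group_add,topological_space} \<Rightarrow> 'x) \<Rightarrow> ('x \<Rightarrow> 'k) topology" where
  "weak_star smul = subtopology (product_topology (\<lambda>_. euclidean) UNIV) (dual smul)"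

definition Fsets :: "('k::real_normed_field \<Rightarrow> 'x::{ab_group_add,topological_space} \<Rightarrow> 'x) \<Rightarrow> ('x \<Rightarrow> 'k) set set" where
  "Fsets smul = {F. F \<noteq> {} \<and> F \<subseteq> dual smul \<and> closedin (weak_star smul) F}"

definition dH :: "'x \<Rightarrow> ('x \<Rightarrow> 'k::real_normed_field) set \<Rightarrow> ('x \<Rightarrow> 'k) set \<Rightarrow> ereal" where
  "dH A F G = max (SUP \<sigma>\<in>F. INF \<tau>\<in>G. ereal (norm (\<sigma> A - \<tau> A)))
                  (SUP \<tau>\<in>G. INF \<sigma>\<in>F. ereal (norm (\<sigma> A - \<tau> A)))"

text \<open>Open sets of the weak*-Hausdorff hypertopology: the topology generated by
  the family of extended pseudometrics dH A, A in X.\<close>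
definition hyper_open :: "('k::real_normed_field \<Rightarrow> 'x::{ab_group_add,topological_space} \<Rightarrow> 'x) \<Rightarrow> ('x \<Rightarrow> 'k) set set \<Rightarrow> bool" where
  "hyper_open smul U \<longleftrightarrow> U \<subseteq> Fsets smul \<and>
     (\<forall>F\<in>U. \<exists>As \<epsilon>. finite As \<and> \<epsilon> > 0 \<and>
        {G\<in>Fsets smul. \<forall>A\<in>As. dH A F G < ereal \<epsilon>} \<subseteq> U)"

definition hyper_closed :: "('k::real_normed_field \<Rightarrow> 'x::{ab_group_add,topological_space} \<Rightarrow> 'x) \<Rightarrow> ('x \<Rightarrow> 'k) set set \<Rightarrow> bool" where
  "hyper_closed smul S \<longleftrightarrow> S \<subseteq> Fsets smul \<and> hyper_open smul (Fsets smul - S)"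

definition V_set :: "('k::real_normed_field \<Rightarrow> 'x::{ab_group_add,topological_space} \<Rightarrow> 'x) \<Rightarrow> 'x \<Rightarrow> ('x \<Rightarrow> 'k) set" where
  "V_set smul A = {\<sigma>\<in>dual smul. norm (\<sigma> A) < 1}"

definition cylinders :: "('k::real_normed_field \<Rightarrow> 'x::{ab_group_add,topological_space} \<Rightarrow> 'x) \<Rightarrow> ('x \<Rightarrow> 'k) set set" where
  "cylinders smul = {\<Inter>A\<in>set As. V_set smul A | As. As \<noteq> []}"

definition Bsets :: "('k::real_normed_field \<Rightarrow> 'x::{ab_group_add,topological_space} \<Rightarrow> 'x) \<Rightarrow> ('x \<Rightarrow> 'k) set \<Rightarrow> ('x \<Rightarrow> 'k) set set" where
  "Bsets smul V = {B\<in>Fsets smul. \<exists>c::real. c > 0 \<and> B \<subseteq> (\<lambda>\<sigma> x. of_real c * \<sigma> x) ` V}"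

end

theory Submission
  imports Defs
begin

text \<open>For a cylinder \<open>V = V_A1 \<inter> ... \<inter> V_An\<close>, a set \<open>F\<close> in \<open>F(X*)\<close> lies in
  \<open>B_V(X*)\<close> exactly when its functionals are uniformly bounded at the finitely many
  points \<open>A1, ..., An\<close>. If \<open>d_H^(Ai)(F, G) < 1\<close> for all \<open>i\<close>, every functional of either
  set is within 1 at \<open>Ai\<close> of a functional of the other, so \<open>F\<close> is bounded there iff
  \<open>G\<close> is. Thus membership in \<open>B_V(X*)\<close> is constant on a basic neighbourhood of every
  point, making both \<open>B_V(X*)\<close> and its complement open.\<close>

definition bounded_at :: "'x set \<Rightarrow> ('x \<Rightarrow> 'k::real_normed_field) set \<Rightarrow> bool" where
  "bounded_at P B \<longleftrightarrow> (\<exists>c. \<forall>\<sigma>\<in>B. \<forall>A\<in>P. norm (\<sigma> A) \<le> c)"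

lemma scaled_in_dual:
  fixes smul :: "'k::real_normed_field \<Rightarrow> 'x::{ab_group_add,topological_space} \<Rightarrow> 'x"
  assumes "\<sigma> \<in> dual smul"
  shows "(\<lambda>x. k * \<sigma> x) \<in> dual smul"
proof -
  have lin: "Vector_Spaces.linear smul (*) \<sigma>" and cont: "continuous_on UNIV \<sigma>"
    using assms by (auto simp: dual_def)
  then have "Vector_Spaces.linear smul (*) (\<lambda>x. k * \<sigma> x)"
    by (auto simp: Vector_Spaces.linear_iff distrib_left mult.left_commute)
  moreover have "continuous_on UNIV (\<lambda>x. k * \<sigma> x)"
    using cont by (intro continuous_intros)
  ultimately show ?thesis by (simp add: dual_def)
qed

lemma subset_scaled_cylinder_iff:
  fixes smul :: "'k::real_normed_field \<Rightarrow> 'x::{ab_group_add,topological_space} \<Rightarrow> 'x"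
  assumes "c > 0" and "B \<subseteq> dual smul"
  shows "B \<subseteq> (\<lambda>\<sigma> x. of_real c * \<sigma> x) ` (\<Inter>A\<in>P. V_set smul A)
           \<longleftrightarrow> (\<forall>\<sigma>\<in>B. \<forall>A\<in>P. norm (\<sigma> A) < c)"
proof
  assume sub: "B \<subseteq> (\<lambda>\<sigma> x. of_real c * \<sigma> x) ` (\<Inter>A\<in>P. V_set smul A)"
  show "\<forall>\<sigma>\<in>B. \<forall>A\<in>P. norm (\<sigma> A) < c"
  proof (intro ballI)
    fix \<sigma> A assume "\<sigma> \<in> B" "A \<in> P"
    with sub obtain \<tau> where "norm (\<tau> A) < 1" "\<sigma> = (\<lambda>x. of_real c * \<tau> x)"
      by (auto simp: V_set_def)
    with \<open>c > 0\<close> show "norm (\<sigma> A) < c" by (simp add: norm_mult)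
  qed
next
  assume bound: "\<forall>\<sigma>\<in>B. \<forall>A\<in>P. norm (\<sigma> A) < c"
  show "B \<subseteq> (\<lambda>\<sigma> x. of_real c * \<sigma> x) ` (\<Inter>A\<in>P. V_set smul A)"
  proof
    fix \<sigma> assume "\<sigma> \<in> B"
    define \<tau> where "\<tau> = (\<lambda>x. of_real (1/c) * \<sigma> x)"
    have "\<tau> \<in> dual smul"
      unfolding \<tau>_def using \<open>\<sigma> \<in> B\<close> assms(2) by (intro scaled_in_dual) auto
    moreover have "norm (\<tau> A) < 1" if "A \<in> P" for A
      using bound \<open>\<sigma> \<in> B\<close> that \<open>c > 0\<close> by (simp add: \<tau>_def norm_mult norm_divide)
    moreover have "\<sigma> = (\<lambda>x. of_real c * \<tau> x)"
      using \<open>c > 0\<close> by (simp add: \<tau>_def)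
    ultimately show "\<sigma> \<in> (\<lambda>\<sigma> x. of_real c * \<sigma> x) ` (\<Inter>A\<in>P. V_set smul A)"
      by (auto simp: V_set_def)
  qed
qed

lemma Bsets_cylinder:
  fixes smul :: "'k::real_normed_field \<Rightarrow> 'x::{ab_group_add,topological_space} \<Rightarrow> 'x"
  shows "Bsets smul (\<Inter>A\<in>P. V_set smul A) = {B\<in>Fsets smul. bounded_at P B}"
proof -
  have bounded_iff: "(\<exists>c>0. \<forall>\<sigma>\<in>B. \<forall>A\<in>P. norm (\<sigma> A) < c) \<longleftrightarrow> bounded_at P B"
    for B :: "('x \<Rightarrow> 'k) set"
  proof
    assume "bounded_at P B"
    then obtain c where "\<forall>\<sigma>\<in>B. \<forall>A\<in>P. norm (\<sigma> A) \<le> c" by (auto simp: bounded_at_def)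
    then have "\<forall>\<sigma>\<in>B. \<forall>A\<in>P. norm (\<sigma> A) < max c 0 + 1" by fastforce
    then show "\<exists>c>0. \<forall>\<sigma>\<in>B. \<forall>A\<in>P. norm (\<sigma> A) < c"
      by (intro exI[of _ "max c 0 + 1"]) auto
  qed (unfold bounded_at_def, meson less_imp_le)
  have "(\<exists>c>0. B \<subseteq> (\<lambda>\<sigma> x. of_real c * \<sigma> x) ` (\<Inter>A\<in>P. V_set smul A)) \<longleftrightarrow> bounded_at P B"
    if "B \<in> Fsets smul" for B
    unfolding bounded_iff[symmetric]
    using subset_scaled_cylinder_iff[where B = B and smul = smul and P = P] that
    by (auto simp: Fsets_def)
  then show ?thesis
    unfolding Bsets_def by blast
qed

lemma dH_commute: "dH A F G = dH A G F"
  by (simp add: dH_def norm_minus_commute max.commute)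

lemma dH_less_imp_near:
  assumes "dH A F G < ereal e" and "\<tau> \<in> G"
  shows "\<exists>\<sigma>\<in>F. norm (\<sigma> A - \<tau> A) < e"
proof -
  have "(INF \<sigma>\<in>F. ereal (norm (\<sigma> A - \<tau> A))) \<le> (SUP \<tau>\<in>G. INF \<sigma>\<in>F. ereal (norm (\<sigma> A - \<tau> A)))"
    using \<open>\<tau> \<in> G\<close> by (rule SUP_upper)
  also have "\<dots> < ereal e"
    using assms(1) by (simp add: dH_def)
  finally show ?thesis by (auto simp: INF_less_iff)
qed

lemma bounded_at_dH_transfer:
  assumes "bounded_at P F" and "\<forall>A\<in>P. dH A F G < ereal e"
  shows "bounded_at P G"
proof -
  obtain c where c: "\<forall>\<sigma>\<in>F. \<forall>A\<in>P. norm (\<sigma> A) \<le> c"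
    using assms(1) by (auto simp: bounded_at_def)
  have "norm (\<tau> A) \<le> c + e" if \<tau>: "\<tau> \<in> G" and A: "A \<in> P" for \<tau> A
  proof -
    obtain \<sigma> where "\<sigma> \<in> F" "norm (\<sigma> A - \<tau> A) < e"
      using dH_less_imp_near[OF bspec[OF assms(2) A] \<tau>] by blast
    moreover have "norm (\<tau> A) \<le> norm (\<sigma> A) + norm (\<sigma> A - \<tau> A)"
      using norm_triangle_ineq2[of "\<tau> A" "\<sigma> A"] by (simp add: norm_minus_commute)
    ultimately show ?thesis using c \<open>A \<in> P\<close> by fastforce
  qed
  then show ?thesis by (auto simp: bounded_at_def)
qed

lemma hyper_clopen_if_dH_saturated:
  assumes "S \<subseteq> Fsets smul" and "finite P" and "e > 0"
    and "\<And>F G. F \<in> Fsets smul \<Longrightarrow> G \<in> Fsets smul \<Longrightarrow> \<forall>A\<in>P. dH A F G < ereal e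
           \<Longrightarrow> F \<in> S \<longleftrightarrow> G \<in> S"
  shows "hyper_closed smul S \<and> hyper_closed smul (Fsets smul - S)"
proof -
  have "hyper_open smul S" "hyper_open smul (Fsets smul - S)"
    unfolding hyper_open_def using assms by blast+
  moreover have "Fsets smul - (Fsets smul - S) = S"
    using assms(1) by blast
  ultimately show ?thesis
    using assms(1) by (simp add: hyper_closed_def)
qed

lemma hyper_clopen_Bsets:
  fixes smul :: "'k::real_normed_field \<Rightarrow> 'x::{ab_group_add,topological_space} \<Rightarrow> 'x"
  assumes "V \<in> cylinders smul"
  shows "hyper_closed smul (Bsets smul V) \<and> hyper_closed smul (Fsets smul - Bsets smul V)"
proof -
  obtain As where V: "V = (\<Inter>A\<in>set As. V_set smul A)"
    using assms by (auto simp: cylinders_def)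
  show ?thesis
    unfolding V Bsets_cylinder
  proof (rule hyper_clopen_if_dH_saturated[where P = "set As" and e = 1])
    fix F G assume "F \<in> Fsets smul" "G \<in> Fsets smul" and near: "\<forall>A\<in>set As. dH A F G < ereal 1"
    moreover from near have "\<forall>A\<in>set As. dH A G F < ereal 1"
      by (simp add: dH_commute)
    ultimately show "F \<in> {B \<in> Fsets smul. bounded_at (set As) B}
                       \<longleftrightarrow> G \<in> {B \<in> Fsets smul. bounded_at (set As) B}"
      by (auto intro: bounded_at_dH_transfer)
  qed auto
qed

theorem proposition3p3:
  fixes sr :: "real \<Rightarrow> 'a::{ab_group_add,t2_space} \<Rightarrow> 'a"
    and sc :: "complex \<Rightarrow> 'b::{ab_group_add,t2_space} \<Rightarrow> 'b"
  shows "(tvs sr \<and> dual_separates sr \<longrightarrow>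
            (\<forall>V\<in>cylinders sr. hyper_closed sr (Bsets sr V)
                             \<and> hyper_closed sr (Fsets sr - Bsets sr V)))
       \<and> (tvs sc \<and> dual_separates sc \<longrightarrow>
            (\<forall>V\<in>cylinders sc. hyper_closed sc (Bsets sc V)
                             \<and> hyper_closed sc (Fsets sc - Bsets sc V)))"
  using hyper_clopen_Bsets[of _ sr] hyper_clopen_Bsets[of _ sc] by blast

end
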